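(* Fix $\alpha,\beta>0$, $\Gamma\ge1$, $R\ge1$, $1\le s\le n_2$, $\gamma>0$ and $c\ge1$. Let $\mathcal{A}:\mathbb{R}^{n_1\times n_2}\to\mathbb{R}^m$ be linear and have the additive rank-$2R$ effectively $(n_1,\max\{s,(\gamma/\beta)^2\})$-sparse RIP$_{(c+1)\Gamma}$ with constant $0<\delta<1$. Let $\hat X=\sum_{r=1}^R\hat u^r(\hat v^r)^T$ have rank $R$, where $\|\hat v^r\|_1\le\sqrt s\,\|\hat v^r\|_2$ for all $r$ and $\sum_{r=1}^R\|\hat u^r\|_2^2\|\hat v^r\|_2^2\le\Gamma^2$ (so $\hat X\in K^{R,\Gamma}_{n_1,s}$), and let $c_{\hat U}>0$ be a constant with $\sum_{r=1}^R(\|\hat u^r\|_2\|\hat v^r\|_2)^{2/3}\le c_{\hat U}R^{2/3}\|\hat X\|_{2/3}^{2/3}$. Let $\eta\in\mathbb{R}^m$, $y=\mathcal{A}(\hat X)+\eta$. Then for any global minimizer $(u^1_{\alpha,\beta},\dots,v^R_{\alpha,\beta})$ of $J^R_{\alpha,\beta}$ satisfying $\|v^r_{\alpha,\beta}\|_2\ge(\|\hat X\|_F+\|\eta\|_2+\sqrt\delta)^2/\gamma$ for all $r\in[R]$ and $\|\sigma_{\alpha,\beta}\|_2\le c\Gamma$, where $(\sigma_{\alpha,\beta})_r=\|u^r_{\alpha,\beta}\|_2\|v^r_{\alpha,\beta}\|_2$, one has $$\|\hat X-X_{\alpha,\beta}\|_F\le\sqrt{s^{1/3}R^{2/3}C_{2,1}c_{\hat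 U}}\;\sqrt[6]{\alpha\beta^2}\;\|\hat X\|_{2/3}^{1/3}+2\|\eta\|_2+\sqrt\delta,$$ where $X_{\alpha,\beta}=\sum_{r=1}^Ru^r_{\alpha,\beta}(v^r_{\alpha,\beta})^T$. Moreover, in this case $X_{\alpha,\beta}\in K^{R,c\Gamma}_{n_1,(\gamma/\beta)^2}$, via the decomposition $X_{\alpha,\beta}=\sum_r(\sigma_{\alpha,\beta})_r\frac{u^r_{\alpha,\beta}}{\|u^r_{\alpha,\beta}\|_2}\big(\frac{v^r_{\alpha,\beta}}{\|v^r_{\alpha,\beta}\|_2}\big)^T$.
   Context: For $y\in\mathbb{R}^m$ and $\alpha,\beta>0$, $J^R_{\alpha,\beta}(u^1,\dots,u^R,v^1,\dots,v^R)=\|y-\mathcal{A}(\sum_{r=1}^Ru^r(v^r)^T)\|_2^2+\alpha\sum_r\|u^r\|_2^2+\beta\sum_r\|v^r\|_1$ on $(\mathbb{R}^{n_1})^R\times(\mathbb{R}^{n_2})^R$. $C_{2,1}=(1/2)^{2/3}+2^{1/3}$. For $0<p<\infty$, $\|Z\|_p$ is the Schatten-$p$ (quasi-)norm, i.e. the $\ell_p$-(quasi-)norm of the vector of singular values of $Z$; $\|\cdot\|_F$ is the Frobenius norm. For $n\ge1$, $s>0$: $K_{n,s}=\{z\in\mathbb{R}^n:\|z\|_2\le1,\ \|z\|_1\le\sqrt s\}$. For $R\ge1,\Gamma\ge1$: $K^{R,\Gamma}_{s_1,s_2}$ is the set of $Z\in\mathbb{R}^{n_1\times n_2}$ of the form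 $Z=\sum_{r=1}^R\sigma_ru^r(v^r)^T$ with $u^r\in K_{n_1,s_1}$, $v^r\in K_{n_2,s_2}$, $\|u^r\|_2=\|v^r\|_2=1$, and $\|\sigma\|_2\le\Gamma$. A linear $\mathcal{A}$ has the additive rank-$R$ effectively $(s_1,s_2)$-sparse RIP$_\Gamma$ with constant $\delta>0$ if $|\|\mathcal{A}(Z)\|_2^2-\|Z\|_F^2|\le\delta$ for all $Z\in K^{R,\Gamma}_{s_1,s_2}$. *)

theory Defs
  imports "HOL-Analysis.Analysis"
begin

(* Matrices in R^{n1 x n2} are modelled as real^'n2^'n1 (row index 'n1, column index 'n2);
   n1 = CARD('n1), n2 = CARD('n2).  The norm on real^'n2^'n1 is the Frobenius norm,
   the norm on real^'n is the Euclidean l2 norm. *)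

definition l1norm :: "real^'n \<Rightarrow> real" where
  "l1norm x = (\<Sum>i\<in>UNIV. \<bar>x $ i\<bar>)"

definition outer :: "real^'n1 \<Rightarrow> real^'n2 \<Rightarrow> real^'n2^'n1" where
  "outer u v = (\<chi> i j. u $ i * v $ j)"

(* eigenvalues (with multiplicity) of the symmetric PSD matrix Z^T Z, chosen via an
   orthogonal diagonalization (spectral theorem) *)
definition gram_eigenvalues :: "real^'n2^'n1 \<Rightarrow> real^'n2" where
  "gram_eigenvalues Z = (SOME lam. \<exists>P::real^'n2^'n2. orthogonal_matrix P \<and>
      transpose Z ** Z = P ** (\<chi> i j. if i = j then lam $ i else 0) ** transpose P)"

(* singular values of Z: square roots of the eigenvalues of Z^T Z
   (padding zeros do not affect Schatten quasi-norms for p > 0) *)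
definition singular_values :: "real^'n2^'n1 \<Rightarrow> real^'n2" where
  "singular_values Z = (\<chi> j. sqrt (gram_eigenvalues Z $ j))"

definition schatten :: "real \<Rightarrow> real^'n2^'n1 \<Rightarrow> real" where
  "schatten p Z = (\<Sum>j\<in>UNIV. (singular_values Z $ j) powr p) powr (1 / p)"

definition J_functional ::
  "real \<Rightarrow> real \<Rightarrow> real^'m \<Rightarrow> (real^'n2^'n1 \<Rightarrow> real^'m) \<Rightarrow> nat
     \<Rightarrow> (nat \<Rightarrow> real^'n1) \<Rightarrow> (nat \<Rightarrow> real^'n2) \<Rightarrow> real" where
  "J_functional \<alpha> \<beta> y A R u v =
     (norm (y - A (\<Sum>r<R. outer (u r) (v r))))\<^sup>2
     + \<alpha> * (\<Sum>r<R. (norm (u r))\<^sup>2) + \<beta> * (\<Sum>r<R. l1norm (v r))"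

definition is_global_minimizer_J ::
  "real \<Rightarrow> real \<Rightarrow> real^'m \<Rightarrow> (real^'n2^'n1 \<Rightarrow> real^'m) \<Rightarrow> nat
     \<Rightarrow> (nat \<Rightarrow> real^'n1) \<Rightarrow> (nat \<Rightarrow> real^'n2) \<Rightarrow> bool" where
  "is_global_minimizer_J \<alpha> \<beta> y A R u v \<longleftrightarrow>
     (\<forall>u' v'. J_functional \<alpha> \<beta> y A R u v \<le> J_functional \<alpha> \<beta> y A R u' v')"

definition C21 :: real where
  "C21 = (1/2) powr (2/3) + 2 powr (1/3)"

definition Kvec :: "real \<Rightarrow> (real^'n) set" where
  "Kvec s = {z. norm z \<le> 1 \<and> l1norm z \<le> sqrt s}"

definition Kmat :: "nat \<Rightarrow> real \<Rightarrow> real \<Rightarrow> real \<Rightarrow> (real^'n2^'n1) set" where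
  "Kmat R \<Gamma> s1 s2 = {Z. \<exists>(\<sigma>::nat \<Rightarrow> real) (u::nat \<Rightarrow> real^'n1) (v::nat \<Rightarrow> real^'n2).
      Z = (\<Sum>r<R. \<sigma> r *\<^sub>R outer (u r) (v r)) \<and>
      (\<forall>r<R. u r \<in> Kvec s1 \<and> v r \<in> Kvec s2 \<and> norm (u r) = 1 \<and> norm (v r) = 1) \<and>
      sqrt (\<Sum>r<R. (\<sigma> r)\<^sup>2) \<le> \<Gamma>}"

definition additive_sparse_RIP ::
  "(real^'n2^'n1 \<Rightarrow> real^'m) \<Rightarrow> nat \<Rightarrow> real \<Rightarrow> real \<Rightarrow> real \<Rightarrow> real \<Rightarrow> bool" where
  "additive_sparse_RIP A R \<Gamma> s1 s2 \<delta> \<longleftrightarrow>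
     (\<forall>Z\<in>Kmat R \<Gamma> s1 s2. \<bar>(norm (A Z))\<^sup>2 - (norm Z)\<^sup>2\<bar> \<le> \<delta>)"

end

theory Submission
  imports Defs
begin

(*
  Comparing J at the minimiser with J at zero gives beta * sum_r |v_r|_1 <= |y|^2, and the
  RIP bounds |y| by B = |Xh| + |eta| + sqrt delta.  Together with |v_r|_2 >= B^2 / gamma this
  makes every v_r nonzero and effectively (gamma/beta)^2-sparse, and minimality forces u_r ~= 0.
  Comparing instead with the factorisation of Xh in which every rank-one term a b^T is
  rescaled to (t a) (b/t)^T with the optimal t (the minimum over t of P t^2 + Q/t is
  C21 (P Q^2)^(1/3)) bounds the residual |y - A X| by |eta| plus the square root of the
  penalty, which the hypothesis on cU turns into the Schatten-2/3 term.  Finally Xh - X is a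
  sum of 2R effectively sparse rank-one terms, so the RIP transfers the bound on |A (Xh - X)|
  to |Xh - X| at the cost of sqrt delta.
*)

lemma l1norm_nonneg: "0 \<le> l1norm x"
  unfolding l1norm_def by (simp add: sum_nonneg)

lemma l1norm_zero [simp]: "l1norm 0 = 0"
  unfolding l1norm_def by simp

lemma l1norm_scaleR: "l1norm (c *\<^sub>R x) = \<bar>c\<bar> * l1norm x"
  unfolding l1norm_def by (simp add: abs_mult sum_distrib_left)

lemma l1norm_pos: "x \<noteq> 0 \<Longrightarrow> 0 < l1norm x"
proof -
  assume "x \<noteq> 0"
  then obtain i where i: "x $ i \<noteq> 0" by (metis vec_eq_iff zero_index)
  have "\<bar>x $ i\<bar> \<le> l1norm x"
    unfolding l1norm_def by (rule member_le_sum) auto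
  with i show ?thesis by linarith
qed

lemma norm_le_l1norm: "norm x \<le> l1norm x"
  unfolding norm_vec_def l1norm_def real_norm_def
  using L2_set_le_sum_abs[of "\<lambda>i. \<bar>x $ i\<bar>" UNIV] by simp

lemma l1norm_le_sqrt_card: "l1norm (x::real^'n) \<le> sqrt (real CARD('n)) * norm x"
proof -
  have "l1norm x \<le> L2_set (\<lambda>i. x $ i) UNIV * L2_set (\<lambda>i::'n. 1::real) UNIV"
    using L2_set_mult_ineq[of "\<lambda>i. x $ i" "\<lambda>i::'n. 1" UNIV] unfolding l1norm_def by simp
  also have "L2_set (\<lambda>i. 1) (UNIV::'n set) = sqrt (real CARD('n))"
    by (simp add: L2_set_constant)
  also have "L2_set (\<lambda>i. x $ i) UNIV = norm x"
    unfolding norm_vec_def L2_set_def by simp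
  finally show ?thesis by (simp add: mult.commute)
qed

lemma effectively_sparse_mono:
  assumes "l1norm x \<le> sqrt s * norm x" "s \<le> s'"
  shows "l1norm x \<le> sqrt s' * norm x"
  using assms(1) mult_right_mono[OF real_sqrt_le_mono[OF assms(2)] norm_ge_zero[of x]] by linarith

lemma one_le_if_effectively_sparse:
  assumes "x \<noteq> 0" and "l1norm x \<le> sqrt s * norm x"
  shows "1 \<le> s"
proof -
  have "norm x \<le> sqrt s * norm x"
    using norm_le_l1norm assms(2) by (rule order_trans)
  with assms(1) have "1 \<le> sqrt s" by simp
  then show ?thesis by simp
qed

lemma outer_scaleR: "outer (a *\<^sub>R u) (b *\<^sub>R v) = (a * b) *\<^sub>R outer u v"
  unfolding outer_def by (simp add: vec_eq_iff)

lemma outer_zero_left [simp]: "outer 0 v = 0"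
  and outer_zero_right [simp]: "outer u 0 = 0"
  unfolding outer_def by (simp_all add: vec_eq_iff)

lemma outer_minus_left: "outer (- u) v = - outer u v"
  unfolding outer_def by (simp add: vec_eq_iff)

lemma outer_eq_scaleR_outer_normalized:
  "outer u v = (norm u * norm v) *\<^sub>R outer (u /\<^sub>R norm u) (v /\<^sub>R norm v)"
  by (cases "u = 0 \<or> v = 0") (auto simp: outer_scaleR field_simps)

lemma normalized_in_Kvec:
  assumes "x \<noteq> 0" and "l1norm x \<le> sqrt s * norm x"
  shows "x /\<^sub>R norm x \<in> Kvec s"
  using assms by (simp add: Kvec_def l1norm_scaleR field_simps)

lemma axis_in_Kvec:
  assumes "1 \<le> s"
  shows "axis i (1::real) \<in> Kvec s"
proof -
  have "l1norm (axis i (1::real)) = 1"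
    by (simp add: l1norm_def axis_def if_distrib cong: if_cong)
  with assms show ?thesis by (simp add: Kvec_def)
qed

lemma sum_outer_in_Kmat:
  fixes u :: "nat \<Rightarrow> real^'n1" and v :: "nat \<Rightarrow> real^'n2"
  assumes "1 \<le> s" and "\<forall>r<R. l1norm (v r) \<le> sqrt s * norm (v r)"
    and "sqrt (\<Sum>r<R. (norm (u r) * norm (v r))\<^sup>2) \<le> \<Gamma>"
  shows "(\<Sum>r<R. outer (u r) (v r)) \<in> Kmat R \<Gamma> (real CARD('n1)) s"
proof -
  \<comment> \<open>vanishing terms get arbitrary unit directions, which must be effectively sparse\<close>
  define u' where "u' r = (if u r = 0 then axis undefined 1 else u r /\<^sub>R norm (u r))" for r
  define v' where "v' r = (if v r = 0 then axis undefined 1 else v r /\<^sub>R norm (v r))" for r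
  have term_eq: "outer (u r) (v r) = (norm (u r) * norm (v r)) *\<^sub>R outer (u' r) (v' r)" for r
    using outer_eq_scaleR_outer_normalized[of "u r" "v r"] by (auto simp: u'_def v'_def)
  have "u' r \<in> Kvec (real CARD('n1)) \<and> v' r \<in> Kvec s \<and> norm (u' r) = 1 \<and> norm (v' r) = 1"
    if "r < R" for r
    using assms(1,2) that l1norm_le_sqrt_card[of "u r"]
    by (auto simp: u'_def v'_def normalized_in_Kvec axis_in_Kvec)
  with assms(3) show ?thesis
    unfolding Kmat_def by (auto simp: term_eq intro!: exI[of _ "\<lambda>r. norm (u r) * norm (v r)"])
qed

lemma sum_lessThan_add:
  "(\<Sum>r<R + (k::nat). f r) = (\<Sum>r<R. f r) + (\<Sum>r<k. f (r + R)::'a::comm_monoid_add)"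
  by (induction k) (simp_all add: ac_simps)

lemma diff_sum_outer_in_Kmat:
  fixes u u' :: "nat \<Rightarrow> real^'n1" and v v' :: "nat \<Rightarrow> real^'n2"
  assumes "1 \<le> s"
    and "\<forall>r<R. l1norm (v r) \<le> sqrt s * norm (v r)" "\<forall>r<R. l1norm (v' r) \<le> sqrt s * norm (v' r)"
    and "sqrt (\<Sum>r<R. (norm (u r) * norm (v r))\<^sup>2) \<le> \<Gamma>"
    and "sqrt (\<Sum>r<R. (norm (u' r) * norm (v' r))\<^sup>2) \<le> \<Gamma>'"
  shows "(\<Sum>r<R. outer (u r) (v r)) - (\<Sum>r<R. outer (u' r) (v' r))
           \<in> Kmat (2 * R) (\<Gamma> + \<Gamma>') (real CARD('n1)) s"
proof -
  define w where "w r = (if r < R then u r else - u' (r - R))" for r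
  define z where "z r = (if r < R then v r else v' (r - R))" for r
  have split: "(\<Sum>r<2 * R. f r) = (\<Sum>r<R. f r) + (\<Sum>r<R. f (r + R))" for f :: "nat \<Rightarrow> 'a::comm_monoid_add"
    using sum_lessThan_add[where R = R and k = R and f = f] by (simp add: mult_2)
  have "\<forall>r<2 * R. l1norm (z r) \<le> sqrt s * norm (z r)"
  proof (intro allI impI)
    fix r assume "r < 2 * R"
    then show "l1norm (z r) \<le> sqrt s * norm (z r)"
      using assms(2,3) by (cases "r < R") (auto simp: z_def)
  qed
  moreover have "sqrt (\<Sum>r<2 * R. (norm (w r) * norm (z r))\<^sup>2) \<le> \<Gamma> + \<Gamma>'"
  proof -
    have "sqrt (\<Sum>r<2 * R. (norm (w r) * norm (z r))\<^sup>2)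
        \<le> sqrt (\<Sum>r<R. (norm (u r) * norm (v r))\<^sup>2) + sqrt (\<Sum>r<R. (norm (u' r) * norm (v' r))\<^sup>2)"
      unfolding split by (simp add: w_def z_def sqrt_add_le_add_sqrt sum_nonneg)
    with assms(4,5) show ?thesis by linarith
  qed
  ultimately have "(\<Sum>r<2 * R. outer (w r) (z r)) \<in> Kmat (2 * R) (\<Gamma> + \<Gamma>') (real CARD('n1)) s"
    by (rule sum_outer_in_Kmat[OF assms(1)])
  moreover have "(\<Sum>r<2 * R. outer (w r) (z r)) = (\<Sum>r<R. outer (u r) (v r)) - (\<Sum>r<R. outer (u' r) (v' r))"
    unfolding split by (simp add: w_def z_def outer_minus_left sum_negf)
  ultimately show ?thesis by simp
qed

lemma le_add_sqrt_if_power2_le: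
  fixes x a d :: real
  assumes "0 \<le> a" "0 \<le> d" "x\<^sup>2 \<le> a\<^sup>2 + d"
  shows "x \<le> a + sqrt d"
proof -
  have "x \<le> sqrt (a\<^sup>2 + d)" using assms(3) by (rule real_le_rsqrt)
  also have "\<dots> \<le> sqrt (a\<^sup>2) + sqrt d" by (rule sqrt_add_le_add_sqrt) (use assms in auto)
  finally show ?thesis using assms(1) by simp
qed

lemma additive_sparse_RIP_norm_bounds:
  assumes "additive_sparse_RIP A R \<Gamma> s1 s2 \<delta>" "Z \<in> Kmat R \<Gamma> s1 s2" "0 \<le> \<delta>"
  shows "norm (A Z) \<le> norm Z + sqrt \<delta>" and "norm Z \<le> norm (A Z) + sqrt \<delta>"
proof -
  have "\<bar>(norm (A Z))\<^sup>2 - (norm Z)\<^sup>2\<bar> \<le> \<delta>"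
    using assms(1,2) by (simp add: additive_sparse_RIP_def)
  then show "norm (A Z) \<le> norm Z + sqrt \<delta>" and "norm Z \<le> norm (A Z) + sqrt \<delta>"
    using assms(3) by (auto intro!: le_add_sqrt_if_power2_le)
qed

lemma additive_sparse_RIP_sum_outer_le:
  fixes u :: "nat \<Rightarrow> real^'n1" and v :: "nat \<Rightarrow> real^'n2"
  assumes "additive_sparse_RIP A (2 * R) \<Gamma>' (real CARD('n1)) s \<delta>" "0 \<le> \<delta>" "1 \<le> s"
    and "\<forall>r<R. l1norm (v r) \<le> sqrt s * norm (v r)"
    and "sqrt (\<Sum>r<R. (norm (u r) * norm (v r))\<^sup>2) \<le> \<Gamma>" "\<Gamma> \<le> \<Gamma>'"
  shows "norm (A (\<Sum>r<R. outer (u r) (v r))) \<le> norm (\<Sum>r<R. outer (u r) (v r)) + sqrt \<delta>"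
proof -
  \<comment> \<open>pad with R vanishing terms to match the rank 2R of the RIP\<close>
  have "(\<Sum>r<R. outer (u r) (v r)) - (\<Sum>r<R. outer 0 0) \<in> Kmat (2 * R) (\<Gamma> + (\<Gamma>' - \<Gamma>)) (real CARD('n1)) s"
    using assms(3,4) by (rule diff_sum_outer_in_Kmat) (use assms(5,6) in simp_all)
  then show ?thesis
    using additive_sparse_RIP_norm_bounds(1)[OF assms(1) _ assms(2)] by simp
qed

lemma power2_powr: "0 \<le> (x::real) \<Longrightarrow> (x\<^sup>2) powr a = x powr (2 * a)"
proof (cases "x = 0")
  case False
  assume "0 \<le> x"
  with False have "x\<^sup>2 = x powr 2" by (simp add: powr_realpow)
  then show ?thesis by (simp add: powr_powr)
qed simp

lemma powr_power2: "((x::real) powr a)\<^sup>2 = x powr (2 * a)"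
  by (cases "x = 0") (simp_all add: powr_power)

lemma C21_nonneg: "0 \<le> C21"
  by (simp add: C21_def)

lemma sqrt_C21_penalty_le:
  fixes p S :: real
  assumes "0 < \<alpha>" "0 < \<beta>" "0 \<le> cU" "p \<le> cU * real R powr (2/3) * S powr (2/3)"
  shows "sqrt (C21 * (\<alpha> * \<beta>\<^sup>2) powr (1/3) * s powr (1/3) * p)
           \<le> sqrt (s powr (1/3) * real R powr (2/3) * C21 * cU) * (\<alpha> * \<beta>\<^sup>2) powr (1/6) * S powr (1/3)"
proof (rule real_le_lsqrt)
  have "C21 * (\<alpha> * \<beta>\<^sup>2) powr (1/3) * s powr (1/3) * p
      \<le> C21 * (\<alpha> * \<beta>\<^sup>2) powr (1/3) * s powr (1/3) * (cU * real R powr (2/3) * S powr (2/3))"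
    using assms(4) C21_nonneg by (intro mult_left_mono) simp_all
  also have "\<dots> = (sqrt (s powr (1/3) * real R powr (2/3) * C21 * cU) * (\<alpha> * \<beta>\<^sup>2) powr (1/6) * S powr (1/3))\<^sup>2"
    using assms(1-3) C21_nonneg by (simp add: power_mult_distrib powr_power2)
  finally show "C21 * (\<alpha> * \<beta>\<^sup>2) powr (1/3) * s powr (1/3) * p
      \<le> (sqrt (s powr (1/3) * real R powr (2/3) * C21 * cU) * (\<alpha> * \<beta>\<^sup>2) powr (1/6) * S powr (1/3))\<^sup>2" .
qed (use assms(3) C21_nonneg in simp)

lemma balanced_rescaling:
  fixes P Q :: real
  assumes "0 < P" "0 < Q"
  shows "\<exists>t>0. P * t\<^sup>2 + Q / t = C21 * (P * Q\<^sup>2) powr (1/3)"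
proof -
  \<comment> \<open>t = q / (k p) = (Q / (2 P)) powr (1/3) is the minimiser of t \<mapsto> P t^2 + Q / t\<close>
  define p q k where "p = P powr (1/3)" and "q = Q powr (1/3)" and "k = (2::real) powr (1/3)"
  have cube: "0 < x \<Longrightarrow> (x powr (1/3))^3 = x" for x :: real
    by (simp add: powr_power)
  have p: "0 < p" "p^3 = P" and q: "0 < q" "q^3 = Q" and k: "0 < k" "k^3 = 2"
    using assms by (simp_all add: p_def q_def k_def cube)
  define t where "t = q / (k * p)"
  have "P * t\<^sup>2 + Q / t = p * q\<^sup>2 * (1 / k\<^sup>2 + k)"
    unfolding t_def p(2)[symmetric] q(2)[symmetric] using p q k
    by (simp add: field_simps power3_eq_cube power2_eq_square)
  also have "p * q\<^sup>2 = (P * Q\<^sup>2) powr (1/3)"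
    using assms by (simp add: p_def q_def powr_mult power2_powr powr_power2)
  also have "1 / k\<^sup>2 + k = C21"
    by (simp add: C21_def k_def powr_power powr_divide)
  finally show ?thesis using p q k by (intro exI[of _ t]) (simp add: t_def mult.commute)
qed

lemma rank_one_penalty_le:
  fixes a :: "real^'n1" and b :: "real^'n2"
  assumes "0 < \<alpha>" "0 < \<beta>" "0 \<le> s" and sparse: "l1norm b \<le> sqrt s * norm b"
  shows "\<exists>a' b'. outer a' b' = outer a b \<and>
           \<alpha> * (norm a')\<^sup>2 + \<beta> * l1norm b'
             \<le> C21 * (\<alpha> * \<beta>\<^sup>2) powr (1/3) * s powr (1/3) * (norm a * norm b) powr (2/3)"
proof (cases "a = 0 \<or> b = 0")
  case True
  then show ?thesis
    using assms C21_nonneg by (intro exI[of _ 0]) auto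
next
  case False
  define P Q where "P = \<alpha> * (norm a)\<^sup>2" and "Q = \<beta> * l1norm b"
  have "0 < P" "0 < Q"
    using False assms by (simp_all add: P_def Q_def l1norm_pos)
  then obtain t where t: "0 < t" and PQ: "P * t\<^sup>2 + Q / t = C21 * (P * Q\<^sup>2) powr (1/3)"
    using balanced_rescaling by blast
  have "P * Q\<^sup>2 \<le> \<alpha> * \<beta>\<^sup>2 * s * (norm a * norm b)\<^sup>2"
  proof -
    have "(l1norm b)\<^sup>2 \<le> (sqrt s * norm b)\<^sup>2"
      using sparse l1norm_nonneg by (rule power_mono)
    then have "Q\<^sup>2 \<le> \<beta>\<^sup>2 * (s * (norm b)\<^sup>2)"
      using assms by (simp add: Q_def power_mult_distrib)
    then have "P * Q\<^sup>2 \<le> P * (\<beta>\<^sup>2 * (s * (norm b)\<^sup>2))"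
      using \<open>0 < P\<close> by (simp add: mult_left_mono)
    then show ?thesis by (simp add: P_def power_mult_distrib ac_simps)
  qed
  then have "(P * Q\<^sup>2) powr (1/3) \<le> (\<alpha> * \<beta>\<^sup>2 * s * (norm a * norm b)\<^sup>2) powr (1/3)"
    using \<open>0 < P\<close> by (intro powr_mono2) auto
  also have "\<dots> = (\<alpha> * \<beta>\<^sup>2) powr (1/3) * s powr (1/3) * (norm a * norm b) powr (2/3)"
    using assms by (simp add: powr_mult power2_powr)
  finally have "(P * Q\<^sup>2) powr (1/3)
      \<le> (\<alpha> * \<beta>\<^sup>2) powr (1/3) * s powr (1/3) * (norm a * norm b) powr (2/3)" .
  moreover have "\<alpha> * (norm (t *\<^sub>R a))\<^sup>2 + \<beta> * l1norm (b /\<^sub>R t) = P * t\<^sup>2 + Q / t"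
    using t by (simp add: P_def Q_def l1norm_scaleR power_mult_distrib divide_inverse)
  moreover have "outer (t *\<^sub>R a) (b /\<^sub>R t) = outer a b"
    using t by (simp add: outer_scaleR)
  ultimately show ?thesis
    using PQ C21_nonneg by (intro exI[of _ "t *\<^sub>R a"] exI[of _ "b /\<^sub>R t"]) (simp add: mult_left_mono ac_simps)
qed

lemma sum_outer_penalty_le:
  fixes u :: "nat \<Rightarrow> real^'n1" and v :: "nat \<Rightarrow> real^'n2"
  assumes "0 < \<alpha>" "0 < \<beta>" "0 \<le> s" "\<forall>r<R. l1norm (v r) \<le> sqrt s * norm (v r)"
  shows "\<exists>u' v'. (\<Sum>r<R. outer (u' r) (v' r)) = (\<Sum>r<R. outer (u r) (v r)) \<and>
           \<alpha> * (\<Sum>r<R. (norm (u' r))\<^sup>2) + \<beta> * (\<Sum>r<R. l1norm (v' r))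
             \<le> C21 * (\<alpha> * \<beta>\<^sup>2) powr (1/3) * s powr (1/3) * (\<Sum>r<R. (norm (u r) * norm (v r)) powr (2/3))"
proof -
  have "\<forall>r\<in>{..<R}. \<exists>ab. outer (fst ab) (snd ab) = outer (u r) (v r) \<and>
      \<alpha> * (norm (fst ab))\<^sup>2 + \<beta> * l1norm (snd ab)
        \<le> C21 * (\<alpha> * \<beta>\<^sup>2) powr (1/3) * s powr (1/3) * (norm (u r) * norm (v r)) powr (2/3)"
    using rank_one_penalty_le[OF assms(1-3)] assms(4) by fastforce
  then obtain f where f: "\<forall>r\<in>{..<R}. outer (fst (f r)) (snd (f r)) = outer (u r) (v r) \<and>
      \<alpha> * (norm (fst (f r)))\<^sup>2 + \<beta> * l1norm (snd (f r))
        \<le> C21 * (\<alpha> * \<beta>\<^sup>2) powr (1/3) * s powr (1/3) * (norm (u r) * norm (v r)) powr (2/3)"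
    by (rule bchoice[elim_format]) blast
  have "\<alpha> * (\<Sum>r<R. (norm (fst (f r)))\<^sup>2) + \<beta> * (\<Sum>r<R. l1norm (snd (f r)))
      = (\<Sum>r<R. \<alpha> * (norm (fst (f r)))\<^sup>2 + \<beta> * l1norm (snd (f r)))"
    by (simp add: sum.distrib sum_distrib_left)
  also have "\<dots> \<le> (\<Sum>r<R. C21 * (\<alpha> * \<beta>\<^sup>2) powr (1/3) * s powr (1/3) * (norm (u r) * norm (v r)) powr (2/3))"
    using f by (intro sum_mono) blast
  finally show ?thesis
    using f by (intro exI[of _ "fst \<circ> f"] exI[of _ "snd \<circ> f"]) (simp add: sum_distrib_left)
qed

lemma J_functional_ge_residual: "0 \<le> \<alpha> \<Longrightarrow> 0 \<le> \<beta> \<Longrightarrow>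
    (norm (y - A (\<Sum>r<R. outer (u r) (v r))))\<^sup>2 \<le> J_functional \<alpha> \<beta> y A R u v"
  unfolding J_functional_def by (simp add: sum_nonneg l1norm_nonneg)

lemma J_global_minimizer_l1norm_le:
  assumes "is_global_minimizer_J \<alpha> \<beta> y A R u v" "linear A" "0 \<le> \<alpha>"
  shows "\<beta> * (\<Sum>r<R. l1norm (v r)) \<le> (norm y)\<^sup>2"
proof -
  have "J_functional \<alpha> \<beta> y A R u v \<le> J_functional \<alpha> \<beta> y A R (\<lambda>_. 0) (\<lambda>_. 0)"
    using assms(1) by (simp add: is_global_minimizer_J_def)
  also have "\<dots> = (norm y)\<^sup>2"
    using assms(2) by (simp add: J_functional_def linear_0)
  moreover have "0 \<le> \<alpha> * (\<Sum>r<R. (norm (u r))\<^sup>2)"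
    using assms(3) by (simp add: sum_nonneg)
  ultimately show ?thesis
    unfolding J_functional_def using zero_le_power2[of "norm (y - A (\<Sum>r<R. outer (u r) (v r)))"]
    by linarith
qed

lemma J_global_minimizer_right_factors:
  assumes "is_global_minimizer_J \<alpha> \<beta> y A R u v" "linear A" "0 \<le> \<alpha>" "0 < \<beta>" "0 < \<gamma>"
    and "norm y \<le> B" "0 < B" "\<forall>r<R. B\<^sup>2 / \<gamma> \<le> norm (v r)"
  shows "\<forall>r<R. v r \<noteq> 0 \<and> l1norm (v r) \<le> sqrt ((\<gamma> / \<beta>)\<^sup>2) * norm (v r)"
proof (intro allI impI conjI)
  fix r assume r: "r < R"
  have "0 < B\<^sup>2 / \<gamma>"
    using assms(5,7) by simp
  with assms(8) r show "v r \<noteq> 0"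
    by force
  have "\<beta> * l1norm (v r) \<le> \<beta> * (\<Sum>r<R. l1norm (v r))"
    using assms(4) r by (intro mult_left_mono member_le_sum) (auto simp: l1norm_nonneg)
  also have "\<dots> \<le> (norm y)\<^sup>2"
    using assms(1-3) by (rule J_global_minimizer_l1norm_le)
  also have "\<dots> \<le> B\<^sup>2"
    using assms(6) by (simp add: power_mono)
  also have "\<dots> \<le> \<gamma> * norm (v r)"
    using assms(5,8) r by (simp add: field_simps)
  finally have "l1norm (v r) \<le> \<gamma> / \<beta> * norm (v r)"
    using assms(4) by (simp add: field_simps)
  then show "l1norm (v r) \<le> sqrt ((\<gamma> / \<beta>)\<^sup>2) * norm (v r)"
    using assms(4,5) by simp
qed

lemma J_global_minimizer_factor_nonzero:
  assumes "is_global_minimizer_J \<alpha> \<beta> y A R u v" "0 < \<beta>" "r < R" "v r \<noteq> 0"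
  shows "u r \<noteq> 0"
proof
  assume u0: "u r = 0"
  \<comment> \<open>then v r does not enter the product, and removing it strictly lowers the l1 penalty\<close>
  define v' where "v' = v(r := 0)"
  have "(\<Sum>r<R. outer (u r) (v' r)) = (\<Sum>r<R. outer (u r) (v r))"
    by (rule sum.cong) (auto simp: v'_def u0)
  moreover have "(\<Sum>r<R. l1norm (v' r)) < (\<Sum>r<R. l1norm (v r))"
    using assms(3,4) by (intro sum_strict_mono_ex1) (auto simp: v'_def l1norm_pos l1norm_nonneg)
  ultimately have "J_functional \<alpha> \<beta> y A R u v' < J_functional \<alpha> \<beta> y A R u v"
    using assms(2) by (simp add: J_functional_def)
  with assms(1) show False
    unfolding is_global_minimizer_J_def by (meson not_le)
qed

lemma J_global_minimizer_residual_le: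
  assumes "is_global_minimizer_J \<alpha> \<beta> y A R u v" "0 \<le> \<alpha>" "0 \<le> \<beta>"
    and "y = A (\<Sum>r<R. outer (u' r) (v' r)) + \<eta>"
  shows "norm (y - A (\<Sum>r<R. outer (u r) (v r)))
           \<le> norm \<eta> + sqrt (\<alpha> * (\<Sum>r<R. (norm (u' r))\<^sup>2) + \<beta> * (\<Sum>r<R. l1norm (v' r)))"
proof (rule le_add_sqrt_if_power2_le)
  have "(norm (y - A (\<Sum>r<R. outer (u r) (v r))))\<^sup>2 \<le> J_functional \<alpha> \<beta> y A R u v"
    using assms(2,3) by (rule J_functional_ge_residual)
  also have "\<dots> \<le> J_functional \<alpha> \<beta> y A R u' v'"
    using assms(1) by (simp add: is_global_minimizer_J_def)
  finally show "(norm (y - A (\<Sum>r<R. outer (u r) (v r))))\<^sup>2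
      \<le> (norm \<eta>)\<^sup>2 + (\<alpha> * (\<Sum>r<R. (norm (u' r))\<^sup>2) + \<beta> * (\<Sum>r<R. l1norm (v' r)))"
    using assms(4) by (simp add: J_functional_def)
qed (use assms(2,3) in \<open>auto simp: sum_nonneg l1norm_nonneg\<close>)

lemma J_global_minimizer_measurement_error_le:
  fixes uh u :: "nat \<Rightarrow> real^'n1" and vh v :: "nat \<Rightarrow> real^'n2"
  assumes "is_global_minimizer_J \<alpha> \<beta> y A R u v" "linear A" "0 < \<alpha>" "0 < \<beta>" "0 \<le> s"
    and "\<forall>r<R. l1norm (vh r) \<le> sqrt s * norm (vh r)"
    and "y = A (\<Sum>r<R. outer (uh r) (vh r)) + \<eta>"
  shows "norm (A ((\<Sum>r<R. outer (uh r) (vh r)) - (\<Sum>r<R. outer (u r) (v r))))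
           \<le> sqrt (C21 * (\<alpha> * \<beta>\<^sup>2) powr (1/3) * s powr (1/3)
                     * (\<Sum>r<R. (norm (uh r) * norm (vh r)) powr (2/3))) + 2 * norm \<eta>"
proof -
  define X where "X = (\<Sum>r<R. outer (u r) (v r))"
  obtain U V where UV: "(\<Sum>r<R. outer (U r) (V r)) = (\<Sum>r<R. outer (uh r) (vh r))"
    and penalty: "\<alpha> * (\<Sum>r<R. (norm (U r))\<^sup>2) + \<beta> * (\<Sum>r<R. l1norm (V r))
      \<le> C21 * (\<alpha> * \<beta>\<^sup>2) powr (1/3) * s powr (1/3) * (\<Sum>r<R. (norm (uh r) * norm (vh r)) powr (2/3))"
    using sum_outer_penalty_le[OF assms(3-6)] by blast
  from penalty have "sqrt (\<alpha> * (\<Sum>r<R. (norm (U r))\<^sup>2) + \<beta> * (\<Sum>r<R. l1norm (V r)))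
      \<le> sqrt (C21 * (\<alpha> * \<beta>\<^sup>2) powr (1/3) * s powr (1/3) * (\<Sum>r<R. (norm (uh r) * norm (vh r)) powr (2/3)))"
    by (rule real_sqrt_le_mono)
  moreover have "norm (y - A X) \<le> norm \<eta> + sqrt (\<alpha> * (\<Sum>r<R. (norm (U r))\<^sup>2) + \<beta> * (\<Sum>r<R. l1norm (V r)))"
    unfolding X_def using assms(1) less_imp_le[OF assms(3)] less_imp_le[OF assms(4)]
    by (rule J_global_minimizer_residual_le) (simp add: UV assms(7))
  moreover have "norm (A ((\<Sum>r<R. outer (uh r) (vh r)) - X)) \<le> norm (y - A X) + norm \<eta>"
    using assms(2,7) norm_triangle_ineq4[of "y - A X" \<eta>] by (simp add: linear_diff)
  ultimately show ?thesis
    unfolding X_def by linarith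
qed

theorem mainTheorem6:
  fixes A :: "real^'n2^'n1 \<Rightarrow> real^'m"
    and \<alpha> \<beta> \<Gamma> s \<gamma> c \<delta> cU :: real and R :: nat
    and uh u :: "nat \<Rightarrow> real^'n1" and vh v :: "nat \<Rightarrow> real^'n2"
    and \<eta> y :: "real^'m"
  assumes "\<alpha> > 0" "\<beta> > 0" "\<Gamma> \<ge> 1" "R \<ge> 1"
    and "1 \<le> s" "s \<le> real CARD('n2)" "\<gamma> > 0" "c \<ge> 1"
    and "linear A"
    and "additive_sparse_RIP A (2 * R) ((c + 1) * \<Gamma>)
           (real CARD('n1)) (max s ((\<gamma> / \<beta>)\<^sup>2)) \<delta>"
    and "0 < \<delta>" "\<delta> < 1"
    and "rank (\<Sum>r<R. outer (uh r) (vh r)) = R"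
    and "\<forall>r<R. l1norm (vh r) \<le> sqrt s * norm (vh r)"
    and "(\<Sum>r<R. (norm (uh r))\<^sup>2 * (norm (vh r))\<^sup>2) \<le> \<Gamma>\<^sup>2"
    and "cU > 0"
    and "(\<Sum>r<R. (norm (uh r) * norm (vh r)) powr (2/3))
           \<le> cU * real R powr (2/3) * (schatten (2/3) (\<Sum>r<R. outer (uh r) (vh r))) powr (2/3)"
    and "y = A (\<Sum>r<R. outer (uh r) (vh r)) + \<eta>"
    and "is_global_minimizer_J \<alpha> \<beta> y A R u v"
    and "\<forall>r<R. norm (v r) \<ge>
           (norm (\<Sum>r<R. outer (uh r) (vh r)) + norm \<eta> + sqrt \<delta>)\<^sup>2 / \<gamma>"
    and "sqrt (\<Sum>r<R. (norm (u r) * norm (v r))\<^sup>2) \<le> c * \<Gamma>"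
  shows "norm ((\<Sum>r<R. outer (uh r) (vh r)) - (\<Sum>r<R. outer (u r) (v r)))
           \<le> sqrt (s powr (1/3) * real R powr (2/3) * C21 * cU) * (\<alpha> * \<beta>\<^sup>2) powr (1/6)
               * (schatten (2/3) (\<Sum>r<R. outer (uh r) (vh r))) powr (1/3)
             + 2 * norm \<eta> + sqrt \<delta>
         \<and> (\<Sum>r<R. outer (u r) (v r)) \<in> Kmat R (c * \<Gamma>) (real CARD('n1)) ((\<gamma> / \<beta>)\<^sup>2)
         \<and> (\<Sum>r<R. outer (u r) (v r))
             = (\<Sum>r<R. (norm (u r) * norm (v r)) *\<^sub>R
                   outer (u r /\<^sub>R norm (u r)) (v r /\<^sub>R norm (v r)))
         \<and> (\<forall>r<R. u r /\<^sub>R norm (u r) \<in> Kvec (real CARD('n1))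
                 \<and> v r /\<^sub>R norm (v r) \<in> Kvec ((\<gamma> / \<beta>)\<^sup>2))"
proof -
  define Xh X where "Xh = (\<Sum>r<R. outer (uh r) (vh r))" and "X = (\<Sum>r<R. outer (u r) (v r))"
  define s' where "s' = max s ((\<gamma> / \<beta>)\<^sup>2)"
  have RIP: "additive_sparse_RIP A (2 * R) ((c + 1) * \<Gamma>) (real CARD('n1)) s' \<delta>"
    using assms(10) by (simp add: s'_def)
  define B where "B = norm Xh + norm \<eta> + sqrt \<delta>"
  define E where "E = sqrt (s powr (1/3) * real R powr (2/3) * C21 * cU) * (\<alpha> * \<beta>\<^sup>2) powr (1/6)
                        * (schatten (2/3) Xh) powr (1/3)"
  have s': "1 \<le> s'"
    using assms(5) by (simp add: s'_def)
  have vh_sparse: "\<forall>r<R. l1norm (vh r) \<le> sqrt s' * norm (vh r)"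
    using assms(14) effectively_sparse_mono[OF _ max.cobounded1] unfolding s'_def by blast
  have vh_bound: "sqrt (\<Sum>r<R. (norm (uh r) * norm (vh r))\<^sup>2) \<le> \<Gamma>"
    using assms(3,15) by (simp add: power_mult_distrib real_le_lsqrt)
  have "norm (A Xh) \<le> norm Xh + sqrt \<delta>"
    unfolding Xh_def using RIP less_imp_le[OF assms(11)] s' vh_sparse vh_bound
    by (rule additive_sparse_RIP_sum_outer_le) (use assms(3,8) in simp)
  then have "norm y \<le> B"
    using norm_triangle_ineq[of "A Xh" \<eta>] assms(18) by (simp add: B_def Xh_def)
  moreover have "0 < B"
    using assms(11) by (simp add: B_def add_nonneg_pos)
  ultimately have v_nonzero: "\<forall>r<R. v r \<noteq> 0"
    and v_sparse: "\<forall>r<R. l1norm (v r) \<le> sqrt ((\<gamma> / \<beta>)\<^sup>2) * norm (v r)"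
    using J_global_minimizer_right_factors[OF assms(19,9) _ assms(2,7)] assms(1,20)
    by (simp_all add: B_def Xh_def)
  have u_nonzero: "\<forall>r<R. u r \<noteq> 0"
    using J_global_minimizer_factor_nonzero[OF assms(19,2)] v_nonzero by blast
  have "1 \<le> (\<gamma> / \<beta>)\<^sup>2"
    using one_le_if_effectively_sparse[of "v 0"] v_sparse v_nonzero assms(4) by simp
  then have X_in_K: "X \<in> Kmat R (c * \<Gamma>) (real CARD('n1)) ((\<gamma> / \<beta>)\<^sup>2)"
    unfolding X_def using v_sparse assms(21) by (rule sum_outer_in_Kmat)
  have "\<forall>r<R. l1norm (v r) \<le> sqrt s' * norm (v r)"
    using v_sparse effectively_sparse_mono[OF _ max.cobounded2] unfolding s'_def by blast
  with s' vh_sparse have "Xh - X \<in> Kmat (2 * R) (\<Gamma> + c * \<Gamma>) (real CARD('n1)) s'"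
    unfolding Xh_def X_def using vh_bound assms(21) by (rule diff_sum_outer_in_Kmat)
  then have error_le: "norm (Xh - X) \<le> norm (A (Xh - X)) + sqrt \<delta>"
    using additive_sparse_RIP_norm_bounds(2)[OF RIP _ less_imp_le[OF assms(11)]]
    by (simp add: algebra_simps)
  have "norm (A (Xh - X)) \<le> E + 2 * norm \<eta>"
    using J_global_minimizer_measurement_error_le[OF assms(19,9,1,2) _ assms(14,18)]
      sqrt_C21_penalty_le[OF assms(1,2) _ assms(17), of s] assms(5,16)
    unfolding X_def Xh_def E_def by simp
  with error_le have "norm (Xh - X) \<le> E + 2 * norm \<eta> + sqrt \<delta>"
    by linarith
  moreover have "X = (\<Sum>r<R. (norm (u r) * norm (v r)) *\<^sub>R outer (u r /\<^sub>R norm (u r)) (v r /\<^sub>R norm (v r)))"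
    unfolding X_def by (intro sum.cong refl outer_eq_scaleR_outer_normalized)
  moreover have "\<forall>r<R. u r /\<^sub>R norm (u r) \<in> Kvec (real CARD('n1)) \<and> v r /\<^sub>R norm (v r) \<in> Kvec ((\<gamma> / \<beta>)\<^sup>2)"
    using u_nonzero v_nonzero v_sparse by (simp add: normalized_in_Kvec l1norm_le_sqrt_card)
  ultimately show ?thesis
    using X_in_K by (simp add: E_def X_def Xh_def)
qed

end
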